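(* For any $n\geq 1$ and any formulas $\psi_1,\dots,\psi_n$, $\mathbf{GLP}\nvdash\bigwedge_{i=1}^n([0]\psi_i\to\psi_i)\to\langle 0\rangle^{n+1}\top$.
   Context: $\mathbf{GLP}$ is the propositional polymodal logic with modalities $[0],[1],\dots$ ($\langle k\rangle:=\neg[k]\neg$) axiomatized by classical tautologies; $[k](\phi\to\psi)\to([k]\phi\to[k]\psi)$; $[k]([k]\phi\to\phi)\to[k]\phi$; $\langle j\rangle\phi\to[k]\langle j\rangle\phi$ for $j<k$; $[j]\phi\to[k]\phi$ for $j\leq k$; rules modus ponens and necessitation. $\langle 0\rangle^{n+1}$ denotes $n+1$ iterations of $\langle 0\rangle$. *)

theory Defs
  imports Main
begin

datatype fm = Bot | Var nat | Imp fm fm | Box nat fm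

definition Neg :: "fm \<Rightarrow> fm" where "Neg p = Imp p Bot"
definition Top :: fm where "Top = Neg Bot"
definition Or :: "fm \<Rightarrow> fm \<Rightarrow> fm" where "Or p q = Imp (Neg p) q"
definition And :: "fm \<Rightarrow> fm \<Rightarrow> fm" where "And p q = Neg (Imp p (Neg q))"
definition Dia :: "nat \<Rightarrow> fm \<Rightarrow> fm" where "Dia k p = Neg (Box k (Neg p))"

fun teval :: "(fm \<Rightarrow> bool) \<Rightarrow> fm \<Rightarrow> bool" where
  "teval v Bot = False"
| "teval v (Var p) = v (Var p)"
| "teval v (Imp p q) = (teval v p \<longrightarrow> teval v q)"
| "teval v (Box k p) = v (Box k p)"

definition tautology :: "fm \<Rightarrow> bool" where
  "tautology p \<longleftrightarrow> (\<forall>v. teval v p)"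

inductive GLP_prov :: "fm \<Rightarrow> bool" where
  taut: "tautology p \<Longrightarrow> GLP_prov p"
| K: "GLP_prov (Imp (Box k (Imp p q)) (Imp (Box k p) (Box k q)))"
| Loeb: "GLP_prov (Imp (Box k (Imp (Box k p) p)) (Box k p))"
| Ax3: "j < k \<Longrightarrow> GLP_prov (Imp (Dia j p) (Box k (Dia j p)))"
| Ax4: "j \<le> k \<Longrightarrow> GLP_prov (Imp (Box j p) (Box k p))"
| MP: "GLP_prov (Imp p q) \<Longrightarrow> GLP_prov p \<Longrightarrow> GLP_prov q"
| Nec: "GLP_prov p \<Longrightarrow> GLP_prov (Box k p)"

fun bigconj :: "fm list \<Rightarrow> fm" where
  "bigconj [] = Top"
| "bigconj [p] = p"
| "bigconj (p # q # ps) = And p (bigconj (q # ps))"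

end

theory Submission
  imports Defs
begin

text \<open>GLP is sound for the model whose worlds are the natural numbers, where [0] quantifies
over all smaller worlds and every [k] with k > 0 over no worlds at all; in this model
\<open>\<langle>0\<rangle>\<^sup>m\<top>\<close> holds exactly at the worlds w \<ge> m. A reflection instance [0]\<psi> \<rightarrow> \<psi> fails at most
at one world, namely the least world where \<psi> fails. Hence n reflection instances fail at
no more than n of the n+1 worlds 0, ..., n, so they all hold at some world w \<le> n, where
\<open>\<langle>0\<rangle>\<^sup>n\<^sup>+\<^sup>1\<top>\<close> is false.\<close>

fun sat :: "nat \<Rightarrow> fm \<Rightarrow> bool" where
  "sat w Bot = False"
| "sat w (Var p) = False"
| "sat w (Imp p q) = (sat w p \<longrightarrow> sat w q)"
| "sat w (Box 0 p) = (\<forall>u<w. sat u p)"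
| "sat w (Box (Suc k) p) = True"

lemma teval_sat: "teval (sat w) p = sat w p"
  by (induction p) auto

lemma tautology_sat: "tautology p \<Longrightarrow> sat w p"
  unfolding tautology_def by (metis teval_sat)

lemma sat_Loeb0:
  assumes "\<forall>u<w. (\<forall>v<u. sat v p) \<longrightarrow> sat u p"
  shows "\<forall>u<w. sat u p"
  using assms by (induction w rule: less_induct) (metis less_trans)

theorem GLP_prov_sat: "GLP_prov p \<Longrightarrow> sat w p"
proof (induction p arbitrary: w rule: GLP_prov.induct)
  case (taut p)
  then show ?case by (rule tautology_sat)
next
  case (K k p q)
  then show ?case by (cases k) auto
next
  case (Loeb k p)
  then show ?case using sat_Loeb0[of w p] by (cases k) auto
next
  case (Ax3 j k p)
  then show ?case by (cases k) auto
next
  case (Ax4 j k p)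
  then show ?case by (cases k; cases j) auto
next
  case (MP p q)
  then show ?case by auto
next
  case (Nec p k)
  then show ?case by (cases k) auto
qed

lemma sat_bigconj: "sat w (bigconj ps) \<longleftrightarrow> (\<forall>p\<in>set ps. sat w p)"
  by (induction ps rule: bigconj.induct) (auto simp: Top_def Neg_def And_def)

lemma sat_Dia0: "sat w (Dia 0 p) \<longleftrightarrow> (\<exists>u<w. sat u p)"
  by (simp add: Dia_def Neg_def)

lemma sat_Dia0_power_Top: "sat w ((Dia 0 ^^ m) Top) \<longleftrightarrow> m \<le> w"
proof (induction m arbitrary: w)
  case 0
  then show ?case by (simp add: Top_def Neg_def)
next
  case (Suc m)
  then show ?case by (auto simp: sat_Dia0 Suc_le_eq)
qed

lemma reflection0_fails_at_most_once:
  assumes "\<not> sat x (Imp (Box 0 p) p)" and "\<not> sat y (Imp (Box 0 p) p)"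
  shows "x = y"
  using assms by simp (metis linorder_neqE_nat)

lemma ex_world_sat_reflections0:
  "\<exists>w \<le> length ps. \<forall>p\<in>set ps. sat w (Imp (Box 0 p) p)"
proof -
  have "\<exists>u. \<forall>w. \<not> sat w (Imp (Box 0 p) p) \<longrightarrow> w = u" for p
    using reflection0_fails_at_most_once by blast
  then obtain failure where failure: "\<And>p w. \<not> sat w (Imp (Box 0 p) p) \<Longrightarrow> w = failure p"
    by metis
  have "card (failure ` set ps) < card {0..length ps}"
    using card_image_le[of "set ps" failure] card_length[of ps] by simp
  then have "\<not> {0..length ps} \<subseteq> failure ` set ps"
    by (meson card_mono finite_imageI List.finite_set not_le)
  then obtain w where "w \<in> {0..length ps}" "w \<notin> failure ` set ps"
    by blast
  moreover have "sat w (Imp (Box 0 p) p)" if "p \<in> set ps" for p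
    using failure[of w p] that \<open>w \<notin> failure ` set ps\<close> by blast
  ultimately show ?thesis
    by auto
qed

theorem mainTheorem13:
  fixes n :: nat and \<psi> :: "nat \<Rightarrow> fm"
  assumes "n \<ge> 1"
  shows "\<not> GLP_prov (Imp (bigconj (map (\<lambda>i. Imp (Box 0 (\<psi> i)) (\<psi> i)) [1..<n+1]))
                          ((Dia 0 ^^ (n + 1)) Top))"
proof
  assume provable: "GLP_prov (Imp (bigconj (map (\<lambda>i. Imp (Box 0 (\<psi> i)) (\<psi> i)) [1..<n+1]))
                          ((Dia 0 ^^ (n + 1)) Top))"
  obtain w where "w \<le> n" and "\<forall>i\<in>{1..<n+1}. sat w (Imp (Box 0 (\<psi> i)) (\<psi> i))"
    using ex_world_sat_reflections0[of "map \<psi> [1..<n+1]"] by (auto simp del: upt_Suc)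
  then have "sat w (bigconj (map (\<lambda>i. Imp (Box 0 (\<psi> i)) (\<psi> i)) [1..<n+1]))"
    by (simp add: sat_bigconj del: upt_Suc sat.simps)
  then have "sat w ((Dia 0 ^^ (n + 1)) Top)"
    using GLP_prov_sat[OF provable, of w] by simp
  then have "n + 1 \<le> w"
    by (simp only: sat_Dia0_power_Top)
  with \<open>w \<le> n\<close> show False
    by simp
qed

end
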